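(* Let $X$ be an infinite discrete space and $G$ a subgroup of the permutation group $\mathrm S(X)$ with the permutation topology $\tau_\partial$. The following conditions are equivalent: (1) the maximal equiuniformity $\mathcal U_X$ on $X$ (for the action $G\curvearrowright X$) is totally bounded; (2) the action of $G$ on $X$ is oligomorphic; (3) for every $n\in\mathbb N$ the maximal equiuniformity $\mathcal U_{X^n}$ on $X^n$ for the diagonal action $G\curvearrowright X^n$ is totally bounded. If one of the equivalent conditions (1)–(3) holds, then $G$ is Roelcke precompact.
   Context: $\tau_\partial$: the group topology on $G$ with neighbourhood base of the identity the pointwise stabilizers $\mathrm{St}_F=\{g\in G\mid g(x)=x\ \forall x\in F\}$, $F\subset X$ finite. For a discrete set $Y$ on which $G$ acts (here $Y=X$ or $Y=X^n$ with $g(y_1,\dots,y_n)=(gy_1,\dots,gy_n)$), the maximal equiuniformity $\mathcal U_Y$ has as base the partitions $\{\mathrm{St}_F\,y\mid y\in Y\}$ of $Y$ into orbits of $\mathrm{St}_F$, where $F$ ranges over finite subsets of $Y$ and $\mathrm{St}_F$ is the pointwise stabilizer of $F$ in $G$. The action is oligomorphic if for every $n\in\mathbb N$ the diagonal action $G\curvearrowright X^n$ has finitely many orbits. $G$ is Roelcke precompact if its Roelcke uniformity (greatest lower bound of left and right uniformities, base $\{UgU\mid g\in G\}$) is totally bounded. *)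

theory Defs
  imports "HOL-Combinatorics.Permutations"
begin

definition perm_subgroup :: "('a \<Rightarrow> 'a) set \<Rightarrow> 'a set \<Rightarrow> bool" where
  "perm_subgroup G X \<longleftrightarrow> (\<forall>g\<in>G. g permutes X) \<and> id \<in> G \<and>
     (\<forall>g\<in>G. \<forall>h\<in>G. g \<circ> h \<in> G) \<and> (\<forall>g\<in>G. inv g \<in> G)"

definition stab :: "('a \<Rightarrow> 'a) set \<Rightarrow> (('a \<Rightarrow> 'a) \<Rightarrow> 'b \<Rightarrow> 'b) \<Rightarrow> 'b set \<Rightarrow> ('a \<Rightarrow> 'a) set" where
  "stab G act F = {g \<in> G. \<forall>y\<in>F. act g y = y}"

definition orbit_entourage :: "('a \<Rightarrow> 'a) set \<Rightarrow> (('a \<Rightarrow> 'a) \<Rightarrow> 'b \<Rightarrow> 'b) \<Rightarrow> 'b set \<Rightarrow> 'b set \<Rightarrow> ('b \<times> 'b) set" where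
  "orbit_entourage G act Y F = {(y, act g y) | y g. y \<in> Y \<and> g \<in> stab G act F}"

text \<open>Maximal equiuniformity U_Y (set of entourages), base: St_F-orbit partitions, F finite subset of Y.\<close>
definition max_equiuniformity :: "('a \<Rightarrow> 'a) set \<Rightarrow> (('a \<Rightarrow> 'a) \<Rightarrow> 'b \<Rightarrow> 'b) \<Rightarrow> 'b set \<Rightarrow> ('b \<times> 'b) set set" where
  "max_equiuniformity G act Y =
     {W. W \<subseteq> Y \<times> Y \<and> (\<exists>F. finite F \<and> F \<subseteq> Y \<and> orbit_entourage G act Y F \<subseteq> W)}"

definition totally_bounded_unif :: "'b set \<Rightarrow> ('b \<times> 'b) set set \<Rightarrow> bool" where
  "totally_bounded_unif Y U \<longleftrightarrow>
     (\<forall>W\<in>U. \<exists>A. finite A \<and> A \<subseteq> Y \<and> Y \<subseteq> (\<Union>a\<in>A. {y. (a, y) \<in> W}))"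

text \<open>X^n as lists of length n with entries in X; diagonal action is map.\<close>
definition tuples :: "'a set \<Rightarrow> nat \<Rightarrow> 'a list set" where
  "tuples X n = {xs. length xs = n \<and> set xs \<subseteq> X}"

definition oligomorphic :: "('a \<Rightarrow> 'a) set \<Rightarrow> 'a set \<Rightarrow> bool" where
  "oligomorphic G X \<longleftrightarrow>
     (\<forall>n::nat. finite {{map g xs | g. g \<in> G} | xs. xs \<in> tuples X n})"

definition perm_nhds_id :: "('a \<Rightarrow> 'a) set \<Rightarrow> 'a set \<Rightarrow> ('a \<Rightarrow> 'a) set set" where
  "perm_nhds_id G X = {V. V \<subseteq> G \<and> (\<exists>F. finite F \<and> F \<subseteq> X \<and> stab G (\<lambda>g x. g x) F \<subseteq> V)}"

definition roelcke_uniformity :: "('a \<Rightarrow> 'a) set \<Rightarrow> 'a set \<Rightarrow> (('a \<Rightarrow> 'a) \<times> ('a \<Rightarrow> 'a)) set set" where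
  "roelcke_uniformity G X =
     {W. W \<subseteq> G \<times> G \<and> (\<exists>V\<in>perm_nhds_id G X.
          {(g, h). g \<in> G \<and> h \<in> {u \<circ> g \<circ> v | u v. u \<in> V \<and> v \<in> V}} \<subseteq> W)}"

definition roelcke_precompact :: "('a \<Rightarrow> 'a) set \<Rightarrow> 'a set \<Rightarrow> bool" where
  "roelcke_precompact G X \<longleftrightarrow> totally_bounded_unif G (roelcke_uniformity G X)"

end

theory Submission
  imports Defs
begin

(* The base entourages of the maximal equiuniformity on Y are the partitions of Y into orbits
   of pointwise stabilisers St_F, F finite, so total boundedness says exactly that every such
   St_F has finitely many orbits on Y. For Y = X^n and F empty this is oligomorphy. Conversely,
   the St_F-orbits on X^n correspond to the G-orbits on X^(n+|F|) of tuples ending in a fixed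
   enumeration of F, so oligomorphy is inherited by the St_F; and the G-orbits on X^(n+1) are
   built from an orbit representative b on X^n together with the finitely many St_b-orbits on X.
   Finally, finitely many St_F-orbits on X^|F| give finitely many double cosets St_F g St_F,
   which is Roelcke precompactness. *)

lemma perm_subgroup_permutes: "perm_subgroup G X \<Longrightarrow> g \<in> G \<Longrightarrow> g permutes X"
  by (simp add: perm_subgroup_def)

lemma perm_subgroup_id: "perm_subgroup G X \<Longrightarrow> id \<in> G"
  by (simp add: perm_subgroup_def)

lemma perm_subgroup_comp: "perm_subgroup G X \<Longrightarrow> g \<in> G \<Longrightarrow> h \<in> G \<Longrightarrow> g \<circ> h \<in> G"
  by (simp add: perm_subgroup_def)

lemma perm_subgroup_inv: "perm_subgroup G X \<Longrightarrow> g \<in> G \<Longrightarrow> inv g \<in> G"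
  by (simp add: perm_subgroup_def)

lemma perm_subgroup_inv_apply: "perm_subgroup G X \<Longrightarrow> g \<in> G \<Longrightarrow> inv g (g x) = x"
  by (metis perm_subgroup_permutes permutes_inverses(2))

lemma perm_subgroup_apply_inv: "perm_subgroup G X \<Longrightarrow> g \<in> G \<Longrightarrow> g (inv g x) = x"
  by (metis perm_subgroup_permutes permutes_inverses(1))

lemma perm_subgroup_apply_in_iff: "perm_subgroup G X \<Longrightarrow> g \<in> G \<Longrightarrow> g x \<in> X \<longleftrightarrow> x \<in> X"
  by (metis perm_subgroup_permutes permutes_in_image)

lemma map_in_tuples:
  "perm_subgroup G X \<Longrightarrow> g \<in> G \<Longrightarrow> xs \<in> tuples X n \<Longrightarrow> map g xs \<in> tuples X n"
  unfolding tuples_def using perm_subgroup_apply_in_iff by fastforce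

lemma map_eq_self_iff: "map g xs = xs \<longleftrightarrow> (\<forall>x\<in>set xs. g x = x)"
  by (metis list.map_id map_eq_conv id_apply)

lemma stab_empty: "stab G act {} = G"
  by (simp add: stab_def)

lemma stab_map: "stab G map F = stab G (\<lambda>g x. g x) (\<Union>(set ` F))"
  unfolding stab_def map_eq_self_iff by blast

lemma stab_factor_if_agree:
  assumes G: "perm_subgroup G X" and h: "h \<in> G" and k: "k \<in> G"
    and agree: "\<And>x. x \<in> F \<Longrightarrow> h x = k x"
  shows "\<exists>v\<in>stab G (\<lambda>g x. g x) F. h = k \<circ> v"
proof (rule bexI[of _ "inv k \<circ> h"])
  show "h = k \<circ> (inv k \<circ> h)"
    by (simp add: fun_eq_iff perm_subgroup_apply_inv[OF G k])
  show "inv k \<circ> h \<in> stab G (\<lambda>g x. g x) F"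
    unfolding stab_def using agree perm_subgroup_inv_apply[OF G k]
      perm_subgroup_comp[OF G perm_subgroup_inv[OF G k] h] by simp
qed

lemma perm_subgroup_stab:
  assumes G: "perm_subgroup G X"
  shows "perm_subgroup (stab G (\<lambda>g x. g x) F) X"
proof -
  have "inv g x = x" if "g \<in> G" "g x = x" for g x
    using perm_subgroup_inv_apply[OF G that(1), of x] that(2) by simp
  then show ?thesis
    using G unfolding perm_subgroup_def stab_def by auto
qed

definition act_orbit :: "('a \<Rightarrow> 'a) set \<Rightarrow> (('a \<Rightarrow> 'a) \<Rightarrow> 'b \<Rightarrow> 'b) \<Rightarrow> 'b \<Rightarrow> 'b set" where
  "act_orbit H act y = {act g y | g. g \<in> H}"

(* For a group this is the same as having finitely many orbits (finite_act_orbits_map_iff);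
   the cover form is the one in which total boundedness is phrased. *)
definition finite_orbit_cover :: "('a \<Rightarrow> 'a) set \<Rightarrow> (('a \<Rightarrow> 'a) \<Rightarrow> 'b \<Rightarrow> 'b) \<Rightarrow> 'b set \<Rightarrow> bool" where
  "finite_orbit_cover H act Y \<longleftrightarrow> (\<exists>A. finite A \<and> A \<subseteq> Y \<and> Y \<subseteq> (\<Union>a\<in>A. act_orbit H act a))"

definition finitely_many_double_cosets :: "('a \<Rightarrow> 'a) set \<Rightarrow> ('a \<Rightarrow> 'a) set \<Rightarrow> bool" where
  "finitely_many_double_cosets G H \<longleftrightarrow>
     (\<exists>S. finite S \<and> S \<subseteq> G \<and> (\<forall>h\<in>G. \<exists>s\<in>S. \<exists>u\<in>H. \<exists>v\<in>H. h = u \<circ> s \<circ> v))"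

lemma mem_act_orbit_map_self:
  assumes "perm_subgroup G X"
  shows "xs \<in> act_orbit G map xs"
  using perm_subgroup_id[OF assms] unfolding act_orbit_def by force

lemma act_orbit_map_eq:
  assumes G: "perm_subgroup G X" and ys: "ys \<in> act_orbit G map xs"
  shows "act_orbit G map ys = act_orbit G map xs"
proof -
  obtain g where g: "g \<in> G" "ys = map g xs"
    using ys unfolding act_orbit_def by blast
  have "map k ys \<in> act_orbit G map xs" if "k \<in> G" for k
  proof -
    have "map k ys = map (k \<circ> g) xs"
      using g(2) by simp
    then show ?thesis
      using perm_subgroup_comp[OF G that g(1)] unfolding act_orbit_def by blast
  qed
  moreover have "map k xs \<in> act_orbit G map ys" if "k \<in> G" for k
  proof -
    have "map k xs = map (k \<circ> inv g) ys"
      using g by (simp add: perm_subgroup_inv_apply[OF G g(1)])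
    then show ?thesis
      using perm_subgroup_comp[OF G that perm_subgroup_inv[OF G g(1)]] unfolding act_orbit_def by blast
  qed
  ultimately show ?thesis
    unfolding act_orbit_def by blast
qed

lemma mem_act_orbit_stab_if_append:
  assumes "xs @ zs \<in> act_orbit G map (ys @ zs)" and "length xs = length ys"
  shows "xs \<in> act_orbit (stab G (\<lambda>g x. g x) (set zs)) map ys"
proof -
  obtain g where g: "g \<in> G" "map g (ys @ zs) = xs @ zs"
    using assms(1) unfolding act_orbit_def by force
  then have "map g ys = xs" "map g zs = zs"
    using assms(2) by simp_all
  then show ?thesis
    using g(1) unfolding act_orbit_def stab_def map_eq_self_iff by auto
qed

lemma Cons_mem_act_orbit_if_stab:
  assumes "x \<in> act_orbit (stab G (\<lambda>g x. g x) (set b)) (\<lambda>g x. g x) c"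
  shows "x # b \<in> act_orbit G map (c # b)"
proof -
  obtain g where g: "g \<in> G" "\<forall>y\<in>set b. g y = y" "x = g c"
    using assms unfolding act_orbit_def stab_def by blast
  then have "x # b = map g (c # b)"
    by (simp add: map_idI)
  then show ?thesis
    using g(1) unfolding act_orbit_def by force
qed

lemma Cons_mem_act_orbit_Cons:
  assumes G: "perm_subgroup G X" and g: "g \<in> G"
    and y: "inv g y \<in> act_orbit (stab G (\<lambda>g x. g x) (set b)) (\<lambda>g x. g x) c"
  shows "y # map g b \<in> act_orbit G map (c # b)"
proof -
  have "y # map g b = map g (inv g y # b)"
    by (simp add: perm_subgroup_apply_inv[OF G g])
  then have "y # map g b \<in> act_orbit G map (inv g y # b)"
    using g unfolding act_orbit_def by auto
  also have "\<dots> = act_orbit G map (c # b)"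
    using act_orbit_map_eq[OF G Cons_mem_act_orbit_if_stab[OF y]] .
  finally show ?thesis .
qed

lemma finite_act_orbits_map_iff:
  assumes G: "perm_subgroup G X"
  shows "finite (act_orbit G map ` Y) \<longleftrightarrow> finite_orbit_cover G map Y"
proof
  assume fin: "finite (act_orbit G map ` Y)"
  define rep where "rep Q = (SOME y. y \<in> Y \<and> act_orbit G map y = Q)" for Q
  have rep: "rep (act_orbit G map y) \<in> Y \<and> act_orbit G map (rep (act_orbit G map y)) = act_orbit G map y"
    if "y \<in> Y" for y
    unfolding rep_def by (rule someI_ex) (use that in blast)
  have "Y \<subseteq> (\<Union>a\<in>rep ` act_orbit G map ` Y. act_orbit G map a)"
  proof
    fix y assume "y \<in> Y"
    then have "y \<in> act_orbit G map (rep (act_orbit G map y))"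
      using rep mem_act_orbit_map_self[OF G] by simp
    then show "y \<in> (\<Union>a\<in>rep ` act_orbit G map ` Y. act_orbit G map a)"
      using \<open>y \<in> Y\<close> by blast
  qed
  moreover have "rep ` act_orbit G map ` Y \<subseteq> Y"
    using rep by blast
  ultimately show "finite_orbit_cover G map Y"
    unfolding finite_orbit_cover_def using fin by blast
next
  assume "finite_orbit_cover G map Y"
  then obtain A where A: "finite A" "Y \<subseteq> (\<Union>a\<in>A. act_orbit G map a)"
    unfolding finite_orbit_cover_def by blast
  have "act_orbit G map ` Y \<subseteq> act_orbit G map ` A"
  proof
    fix Q assume "Q \<in> act_orbit G map ` Y"
    then obtain y a where "Q = act_orbit G map y" "a \<in> A" "y \<in> act_orbit G map a"
      using A(2) by blast
    then show "Q \<in> act_orbit G map ` A"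
      using act_orbit_map_eq[OF G] by blast
  qed
  then show "finite (act_orbit G map ` Y)"
    using A(1) finite_surj by blast
qed

lemma oligomorphic_iff_finite_orbit_cover:
  assumes G: "perm_subgroup G X"
  shows "oligomorphic G X \<longleftrightarrow> (\<forall>n. finite_orbit_cover G map (tuples X n))"
proof -
  have "{{map g xs | g. g \<in> G} | xs. xs \<in> tuples X n} = act_orbit G map ` tuples X n" for n
    by (auto simp: act_orbit_def)
  then show ?thesis
    unfolding oligomorphic_def by (simp add: finite_act_orbits_map_iff[OF G])
qed

lemma finite_orbit_cover_subset:
  assumes G: "perm_subgroup G X" and "finite_orbit_cover G map Y" and "Z \<subseteq> Y"
  shows "finite_orbit_cover G map Z"
  using assms(2,3) finite_subset[OF image_mono[OF assms(3)]]
  unfolding finite_act_orbits_map_iff[OF G, symmetric] by blast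

lemma orbit_entourage_neighbourhood:
  "a \<in> Y \<Longrightarrow> {y. (a, y) \<in> orbit_entourage G act Y F} = act_orbit (stab G act F) act a"
  unfolding orbit_entourage_def act_orbit_def by blast

lemma orbit_entourage_mem_max_equiuniformity:
  assumes "\<forall>g\<in>G. \<forall>y\<in>Y. act g y \<in> Y" and "finite F" and "F \<subseteq> Y"
  shows "orbit_entourage G act Y F \<in> max_equiuniformity G act Y"
proof -
  have "orbit_entourage G act Y F \<subseteq> Y \<times> Y"
    using assms(1) unfolding orbit_entourage_def stab_def by auto
  then show ?thesis
    using assms(2,3) unfolding max_equiuniformity_def by blast
qed

lemma totally_bounded_max_equiuniformity_iff:
  assumes invariant: "\<forall>g\<in>G. \<forall>y\<in>Y. act g y \<in> Y"
  shows "totally_bounded_unif Y (max_equiuniformity G act Y) \<longleftrightarrow>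
    (\<forall>F. finite F \<and> F \<subseteq> Y \<longrightarrow> finite_orbit_cover (stab G act F) act Y)"
proof (intro iffI allI impI)
  fix F assume tb: "totally_bounded_unif Y (max_equiuniformity G act Y)" and F: "finite F \<and> F \<subseteq> Y"
  then have "orbit_entourage G act Y F \<in> max_equiuniformity G act Y"
    using orbit_entourage_mem_max_equiuniformity[OF invariant] by blast
  from tb[unfolded totally_bounded_unif_def, rule_format, OF this]
  obtain A where A: "finite A" "A \<subseteq> Y" "Y \<subseteq> (\<Union>a\<in>A. {y. (a, y) \<in> orbit_entourage G act Y F})"
    by blast
  have "(\<Union>a\<in>A. {y. (a, y) \<in> orbit_entourage G act Y F}) = (\<Union>a\<in>A. act_orbit (stab G act F) act a)"
    using A(2) by (intro SUP_cong refl orbit_entourage_neighbourhood) blast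
  then show "finite_orbit_cover (stab G act F) act Y"
    unfolding finite_orbit_cover_def using A by (metis (no_types, lifting))
next
  assume covers: "\<forall>F. finite F \<and> F \<subseteq> Y \<longrightarrow> finite_orbit_cover (stab G act F) act Y"
  show "totally_bounded_unif Y (max_equiuniformity G act Y)"
    unfolding totally_bounded_unif_def
  proof
    fix W assume "W \<in> max_equiuniformity G act Y"
    then obtain F where "finite F" "F \<subseteq> Y" and W: "orbit_entourage G act Y F \<subseteq> W"
      unfolding max_equiuniformity_def by blast
    with covers have "finite_orbit_cover (stab G act F) act Y"
      by blast
    then obtain A where A: "finite A" "A \<subseteq> Y" "Y \<subseteq> (\<Union>a\<in>A. act_orbit (stab G act F) act a)"
      unfolding finite_orbit_cover_def by blast
    have "act_orbit (stab G act F) act a \<subseteq> {y. (a, y) \<in> W}" if "a \<in> A" for a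
      using orbit_entourage_neighbourhood[of a Y G act F] that A(2) W by blast
    then have "(\<Union>a\<in>A. act_orbit (stab G act F) act a) \<subseteq> (\<Union>a\<in>A. {y. (a, y) \<in> W})"
      by (rule SUP_subset_mono[OF order_refl])
    with A(3) have "Y \<subseteq> (\<Union>a\<in>A. {y. (a, y) \<in> W})"
      by (rule order_trans)
    then show "\<exists>A. finite A \<and> A \<subseteq> Y \<and> Y \<subseteq> (\<Union>a\<in>A. {y. (a, y) \<in> W})"
      using A(1,2) by blast
  qed
qed

lemma finite_orbit_cover_Suc_tuples:
  assumes G: "perm_subgroup G X" and cover: "finite_orbit_cover G map (tuples X n)"
    and stab_cover: "\<And>b. b \<in> tuples X n \<Longrightarrow>
      finite_orbit_cover (stab G (\<lambda>g x. g x) (set b)) (\<lambda>g x. g x) X"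
  shows "finite_orbit_cover G map (tuples X (Suc n))"
proof -
  obtain B where B: "finite B" "B \<subseteq> tuples X n" "tuples X n \<subseteq> (\<Union>b\<in>B. act_orbit G map b)"
    using cover unfolding finite_orbit_cover_def by blast
  have "\<forall>b\<in>B. \<exists>C. finite C \<and> C \<subseteq> X \<and>
      X \<subseteq> (\<Union>c\<in>C. act_orbit (stab G (\<lambda>g x. g x) (set b)) (\<lambda>g x. g x) c)"
    using stab_cover B(2) unfolding finite_orbit_cover_def by blast
  then obtain C where C: "\<And>b. b \<in> B \<Longrightarrow> finite (C b) \<and> C b \<subseteq> X \<and>
      X \<subseteq> (\<Union>c\<in>C b. act_orbit (stab G (\<lambda>g x. g x) (set b)) (\<lambda>g x. g x) c)"
    by metis
  define A where "A = (\<Union>b\<in>B. (\<lambda>c. c # b) ` C b)"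
  have "c # b \<in> tuples X (Suc n)" if "b \<in> B" "c \<in> C b" for b c
    using that B(2) C[OF that(1)] by (auto simp: tuples_def)
  then have "A \<subseteq> tuples X (Suc n)"
    unfolding A_def by blast
  moreover have "finite A"
    unfolding A_def using B(1) C by blast
  moreover have "tuples X (Suc n) \<subseteq> (\<Union>a\<in>A. act_orbit G map a)"
  proof
    fix ys assume "ys \<in> tuples X (Suc n)"
    then obtain y xs where ys: "ys = y # xs" "y \<in> X" "xs \<in> tuples X n"
      by (cases ys) (auto simp: tuples_def)
    then obtain b where "b \<in> B" "xs \<in> act_orbit G map b"
      using B(3) by blast
    then obtain g where b: "b \<in> B" "g \<in> G" "xs = map g b"
      unfolding act_orbit_def by auto
    have "inv g y \<in> X"
      using ys(2) perm_subgroup_apply_in_iff[OF G perm_subgroup_inv[OF G b(2)]] by simp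
    then obtain c where c: "c \<in> C b" "inv g y \<in> act_orbit (stab G (\<lambda>g x. g x) (set b)) (\<lambda>g x. g x) c"
      using C[OF b(1)] by blast
    have "ys \<in> act_orbit G map (c # b)"
      using Cons_mem_act_orbit_Cons[OF G b(2) c(2)] ys(1) b(3) by simp
    moreover have "c # b \<in> A"
      unfolding A_def using b(1) c(1) by blast
    ultimately show "ys \<in> (\<Union>a\<in>A. act_orbit G map a)"
      by blast
  qed
  ultimately show ?thesis
    unfolding finite_orbit_cover_def by blast
qed

lemma finite_orbit_cover_tuples_if_stab_cover:
  assumes G: "perm_subgroup G X"
    and stab_cover: "\<And>E. finite E \<Longrightarrow> E \<subseteq> X \<Longrightarrow>
      finite_orbit_cover (stab G (\<lambda>g x. g x) E) (\<lambda>g x. g x) X"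
  shows "finite_orbit_cover G map (tuples X n)"
proof (induction n)
  case 0
  have "tuples X 0 = {[]}"
    by (auto simp: tuples_def)
  then show ?case
    unfolding finite_orbit_cover_def using mem_act_orbit_map_self[OF G, of "[]"]
    by (intro exI[of _ "{[]}"]) simp
next
  case (Suc n)
  have "finite_orbit_cover (stab G (\<lambda>g x. g x) (set b)) (\<lambda>g x. g x) X" if "b \<in> tuples X n" for b
    using that by (intro stab_cover) (simp_all add: tuples_def)
  with Suc show ?case
    by (rule finite_orbit_cover_Suc_tuples[OF G])
qed

lemma finite_orbit_cover_stab_if_longer_tuples:
  assumes G: "perm_subgroup G X" and zs: "set zs \<subseteq> X"
    and cover: "finite_orbit_cover G map (tuples X (n + length zs))"
  shows "finite_orbit_cover (stab G (\<lambda>g x. g x) (set zs)) map (tuples X n)"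
proof -
  have "(\<lambda>xs. xs @ zs) ` tuples X n \<subseteq> tuples X (n + length zs)"
    using zs by (auto simp: tuples_def)
  from finite_orbit_cover_subset[OF G cover this] obtain A where A: "finite A"
    "A \<subseteq> (\<lambda>xs. xs @ zs) ` tuples X n" "(\<lambda>xs. xs @ zs) ` tuples X n \<subseteq> (\<Union>a\<in>A. act_orbit G map a)"
    unfolding finite_orbit_cover_def by blast
  from finite_subset_image[OF A(1,2)] obtain B where B: "B \<subseteq> tuples X n" "finite B"
    "A = (\<lambda>xs. xs @ zs) ` B"
    by blast
  have "tuples X n \<subseteq> (\<Union>b\<in>B. act_orbit (stab G (\<lambda>g x. g x) (set zs)) map b)"
  proof
    fix xs assume xs: "xs \<in> tuples X n"
    then obtain b where b: "b \<in> B" "xs @ zs \<in> act_orbit G map (b @ zs)"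
      using A(3) B(3) by blast
    moreover have "length xs = length b"
      using xs b(1) B(1) by (auto simp: tuples_def)
    ultimately show "xs \<in> (\<Union>b\<in>B. act_orbit (stab G (\<lambda>g x. g x) (set zs)) map b)"
      using mem_act_orbit_stab_if_append by blast
  qed
  then show ?thesis
    unfolding finite_orbit_cover_def using B(1,2) by blast
qed
lemma finite_orbit_cover_stab_if_oligomorphic:
  assumes G: "perm_subgroup G X" and olig: "oligomorphic G X" and E: "finite E" "E \<subseteq> X"
  shows "finite_orbit_cover (stab G (\<lambda>g x. g x) E) map (tuples X n)"
proof -
  obtain zs where zs: "set zs = E"
    using finite_list[OF E(1)] by blast
  have "finite_orbit_cover G map (tuples X (n + length zs))"
    using olig unfolding oligomorphic_iff_finite_orbit_cover[OF G] by blast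
  from finite_orbit_cover_stab_if_longer_tuples[OF G _ this] show ?thesis
    using zs E(2) by simp
qed

lemma finite_orbit_cover_if_singleton_tuples:
  assumes "finite_orbit_cover H map (tuples X 1)"
  shows "finite_orbit_cover H (\<lambda>g x. g x) X"
proof -
  obtain A where A: "finite A" "A \<subseteq> tuples X 1" "tuples X 1 \<subseteq> (\<Union>a\<in>A. act_orbit H map a)"
    using assms unfolding finite_orbit_cover_def by blast
  have singleton: "a = [hd a]" "hd a \<in> X" if "a \<in> A" for a
    using that A(2) by (auto simp: tuples_def length_Suc_conv)
  have "X \<subseteq> (\<Union>x\<in>hd ` A. act_orbit H (\<lambda>g x. g x) x)"
  proof
    fix y assume "y \<in> X"
    then have "[y] \<in> tuples X 1"
      by (simp add: tuples_def)
    then obtain a where a: "a \<in> A" "[y] \<in> act_orbit H map a"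
      using A(3) by blast
    then obtain g where "g \<in> H" "[y] = map g [hd a]"
      using singleton(1)[OF a(1)] unfolding act_orbit_def by force
    then have "y \<in> act_orbit H (\<lambda>g x. g x) (hd a)"
      unfolding act_orbit_def by auto
    then show "y \<in> (\<Union>x\<in>hd ` A. act_orbit H (\<lambda>g x. g x) x)"
      using a(1) by blast
  qed
  moreover have "hd ` A \<subseteq> X"
    using singleton(2) by blast
  ultimately show ?thesis
    unfolding finite_orbit_cover_def using A(1) by (intro exI[of _ "hd ` A"]) simp
qed

lemma finitely_many_double_cosets_stab:
  assumes G: "perm_subgroup G X" and zs: "set zs \<subseteq> X"
    and cover: "finite_orbit_cover (stab G (\<lambda>g x. g x) (set zs)) map (tuples X (length zs))"
  shows "finitely_many_double_cosets G (stab G (\<lambda>g x. g x) (set zs))"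
proof -
  let ?St = "stab G (\<lambda>g x. g x) (set zs)"
  have "act_orbit G map zs \<subseteq> tuples X (length zs)"
    using zs perm_subgroup_apply_in_iff[OF G] unfolding act_orbit_def tuples_def by fastforce
  from finite_orbit_cover_subset[OF perm_subgroup_stab[OF G] cover this]
  obtain A where A: "finite A" "A \<subseteq> act_orbit G map zs"
    "act_orbit G map zs \<subseteq> (\<Union>a\<in>A. act_orbit ?St map a)"
    unfolding finite_orbit_cover_def by blast
  have "\<forall>a\<in>A. \<exists>s. s \<in> G \<and> map s zs = a"
    using A(2) unfolding act_orbit_def by blast
  then obtain s where s: "\<And>a. a \<in> A \<Longrightarrow> s a \<in> G \<and> map (s a) zs = a"
    by (metis bchoice)
  have "\<exists>t\<in>s ` A. \<exists>u\<in>?St. \<exists>v\<in>?St. h = u \<circ> t \<circ> v" if h: "h \<in> G" for h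
  proof -
    have "map h zs \<in> act_orbit G map zs"
      using h unfolding act_orbit_def by blast
    then obtain a u where a: "a \<in> A" "u \<in> ?St" "map h zs = map u a"
      using A(3) unfolding act_orbit_def by blast
    then have "map h zs = map (u \<circ> s a) zs"
      using s by (metis map_map)
    moreover have "u \<circ> s a \<in> G"
      using a(2) s[OF a(1)] perm_subgroup_comp[OF G] unfolding stab_def by blast
    ultimately obtain v where "v \<in> ?St" "h = u \<circ> s a \<circ> v"
      using stab_factor_if_agree[OF G h, of "u \<circ> s a" "set zs"] by (auto simp: map_eq_conv)
    then show ?thesis
      using a(1,2) by blast
  qed
  moreover have "s ` A \<subseteq> G"
    using s by blast
  ultimately show ?thesis
    unfolding finitely_many_double_cosets_def using A(1) by (intro exI[of _ "s ` A"]) simp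
qed
lemma roelcke_precompact_if_finitely_many_double_cosets:
  assumes "\<And>F. finite F \<Longrightarrow> F \<subseteq> X \<Longrightarrow> finitely_many_double_cosets G (stab G (\<lambda>g x. g x) F)"
  shows "roelcke_precompact G X"
  unfolding roelcke_precompact_def totally_bounded_unif_def
proof
  fix W assume "W \<in> roelcke_uniformity G X"
  then obtain V F where V: "{(g, h). g \<in> G \<and> h \<in> {u \<circ> g \<circ> v | u v. u \<in> V \<and> v \<in> V}} \<subseteq> W"
    and F: "finite F" "F \<subseteq> X" "stab G (\<lambda>g x. g x) F \<subseteq> V"
    unfolding roelcke_uniformity_def perm_nhds_id_def by blast
  obtain S where S: "finite S" "S \<subseteq> G"
    "\<forall>h\<in>G. \<exists>s\<in>S. \<exists>u\<in>stab G (\<lambda>g x. g x) F. \<exists>v\<in>stab G (\<lambda>g x. g x) F. h = u \<circ> s \<circ> v"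
    using assms[OF F(1,2)] unfolding finitely_many_double_cosets_def by blast
  have "G \<subseteq> (\<Union>s\<in>S. {h. (s, h) \<in> W})"
  proof
    fix h assume "h \<in> G"
    then obtain s u v where "s \<in> S" "u \<in> V" "v \<in> V" "h = u \<circ> s \<circ> v"
      using S(3) F(3) by blast
    then have "(s, h) \<in> W"
      using V S(2) by blast
    then show "h \<in> (\<Union>s\<in>S. {h. (s, h) \<in> W})"
      using \<open>s \<in> S\<close> by blast
  qed
  then show "\<exists>A. finite A \<and> A \<subseteq> G \<and> G \<subseteq> (\<Union>a\<in>A. {y. (a, y) \<in> W})"
    using S(1,2) by blast
qed

lemma totally_bounded_max_equiuniformity_iff_oligomorphic:
  assumes G: "perm_subgroup G X"
  shows "totally_bounded_unif X (max_equiuniformity G (\<lambda>g x. g x) X) \<longleftrightarrow> oligomorphic G X"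
proof -
  have "\<forall>g\<in>G. \<forall>x\<in>X. g x \<in> X"
    using perm_subgroup_apply_in_iff[OF G] by blast
  note tb_iff = totally_bounded_max_equiuniformity_iff[of G X "\<lambda>g x. g x", OF this]
  show ?thesis
  proof
    assume "totally_bounded_unif X (max_equiuniformity G (\<lambda>g x. g x) X)"
    then have "finite_orbit_cover G map (tuples X n)" for n
      unfolding tb_iff by (intro finite_orbit_cover_tuples_if_stab_cover[OF G]) blast
    then show "oligomorphic G X"
      unfolding oligomorphic_iff_finite_orbit_cover[OF G] by blast
  next
    assume "oligomorphic G X"
    then have "finite_orbit_cover (stab G (\<lambda>g x. g x) F) (\<lambda>g x. g x) X" if "finite F" "F \<subseteq> X" for F
      using that
      by (intro finite_orbit_cover_if_singleton_tuples finite_orbit_cover_stab_if_oligomorphic[OF G])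
    then show "totally_bounded_unif X (max_equiuniformity G (\<lambda>g x. g x) X)"
      unfolding tb_iff by blast
  qed
qed

lemma oligomorphic_iff_totally_bounded_tuples:
  assumes G: "perm_subgroup G X"
  shows "oligomorphic G X \<longleftrightarrow>
    (\<forall>n. totally_bounded_unif (tuples X n) (max_equiuniformity G map (tuples X n)))"
proof -
  have "\<forall>g\<in>G. \<forall>xs\<in>tuples X n. map g xs \<in> tuples X n" for n
    using map_in_tuples[OF G] by blast
  note tb_iff = totally_bounded_max_equiuniformity_iff[OF this]
  show ?thesis
  proof
    assume olig: "oligomorphic G X"
    have "finite_orbit_cover (stab G map F) map (tuples X n)"
      if "finite F" "F \<subseteq> tuples X n" for n F
    proof -
      have "finite (\<Union>(set ` F))" "\<Union>(set ` F) \<subseteq> X"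
        using that by (auto simp: tuples_def)
      then show ?thesis
        unfolding stab_map by (rule finite_orbit_cover_stab_if_oligomorphic[OF G olig])
    qed
    then show "\<forall>n. totally_bounded_unif (tuples X n) (max_equiuniformity G map (tuples X n))"
      unfolding tb_iff by blast
  next
    assume "\<forall>n. totally_bounded_unif (tuples X n) (max_equiuniformity G map (tuples X n))"
    then have "finite_orbit_cover (stab G map {}) map (tuples X n)" for n
      unfolding tb_iff by blast
    then show "oligomorphic G X"
      unfolding oligomorphic_iff_finite_orbit_cover[OF G] stab_empty by blast
  qed
qed

lemma roelcke_precompact_if_oligomorphic:
  assumes G: "perm_subgroup G X" and olig: "oligomorphic G X"
  shows "roelcke_precompact G X"
proof (rule roelcke_precompact_if_finitely_many_double_cosets)
  fix F assume F: "finite F" "F \<subseteq> X"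
  then obtain zs where zs: "set zs = F"
    using finite_list by blast
  have "finite_orbit_cover (stab G (\<lambda>g x. g x) (set zs)) map (tuples X (length zs))"
    using F zs by (intro finite_orbit_cover_stab_if_oligomorphic[OF G olig]) auto
  from finitely_many_double_cosets_stab[OF G _ this]
  show "finitely_many_double_cosets G (stab G (\<lambda>g x. g x) F)"
    using F(2) zs by simp
qed

theorem theorem3p1:
  fixes X :: "'a set" and G :: "('a \<Rightarrow> 'a) set"
  assumes "infinite X" and "perm_subgroup G X"
  shows "(totally_bounded_unif X (max_equiuniformity G (\<lambda>g x. g x) X) \<longleftrightarrow> oligomorphic G X)
       \<and> (oligomorphic G X \<longleftrightarrow>
          (\<forall>n::nat. totally_bounded_unif (tuples X n) (max_equiuniformity G map (tuples X n))))
       \<and> (oligomorphic G X \<longrightarrow> roelcke_precompact G X)"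
  using totally_bounded_max_equiuniformity_iff_oligomorphic[OF assms(2)]
    oligomorphic_iff_totally_bounded_tuples[OF assms(2)]
    roelcke_precompact_if_oligomorphic[OF assms(2)]
  by blast

end
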